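(* Let $n\ge1$ and $0\le \bar s\le n$. Then $$\max\Big\{\prod_{i=1}^n(1+z_i^2)\ :\ z_1,\dots,z_n\in[0,1],\ \sum_{i=1}^n z_i=\bar s\Big\}=2^{\lfloor \bar s\rfloor}\big[1+(\bar s-\lfloor\bar s\rfloor)^2\big],$$ equivalently the maximum of $1+\sum_{k=1}^n\sum_{1\le i_1<\cdots<i_k\le n}z_{i_1}^2\cdots z_{i_k}^2$ over this set equals the same value.
   Context: $\lfloor x\rfloor$ denotes the greatest integer less than or equal to $x$. *)

theory Defs
  imports Complex_Main
begin

end

theory Submission
  imports Defs
begin

text \<open>
  Write \<open>V(s) = 2^\<lfloor>s\<rfloor> (1 + frac(s)^2)\<close>. Adding one more coordinate \<open>t \<in> [0,1]\<close> to a
  vector with sum \<open>u\<close> multiplies the product by \<open>1 + t^2\<close>, and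
  \<open>(1 + t^2) V(u) \<le> V(u + t)\<close>: merging \<open>t\<close> into the fractional part of \<open>u\<close> either keeps
  the carry below 1, where \<open>(1 + f^2)(1 + t^2) \<le> 1 + (f + t)^2\<close>, or overflows it, where
  \<open>(1 + f^2)(1 + t^2) \<le> 2 (1 + (f + t - 1)^2)\<close>. Induction on \<open>n\<close> gives the upper bound,
  and the staircase vector \<open>(1, \<dots>, 1, frac s, 0, \<dots>, 0)\<close> attains it.
\<close>

definition stair_value :: "real \<Rightarrow> real" where
  "stair_value s = 2 ^ nat \<lfloor>s\<rfloor> * (1 + (frac s)\<^sup>2)"

lemma stair_value_of_nat_add:
  assumes "0 \<le> t" "t \<le> 1"
  shows "stair_value (real m + t) = 2 ^ m * (1 + t\<^sup>2)"
proof (cases "t = 1")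
  case True
  have "\<lfloor>real m + 1\<rfloor> = int m + 1" by linarith
  moreover have "nat (int m + 1) = Suc m" by simp
  ultimately show ?thesis using True by (simp add: stair_value_def frac_def)
next
  case False
  then have "\<lfloor>real m + t\<rfloor> = int m" using assms by linarith
  then show ?thesis by (simp add: stair_value_def frac_def)
qed

lemma one_plus_square_mult_le:
  fixes a b :: real
  assumes "0 \<le> a" "a \<le> 1" "0 \<le> b" "b \<le> 1"
  shows "(1 + a\<^sup>2) * (1 + b\<^sup>2) \<le> 1 + (a + b)\<^sup>2"
proof -
  have "a * b \<le> 1" using assms by (simp add: mult_le_one)
  then have "(a * b) * (a * b) \<le> 2 * (a * b)"
    using assms by (intro mult_right_mono) auto
  then show ?thesis by (simp add: algebra_simps power2_eq_square)
qed

lemma one_plus_square_mult_le_carry: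
  fixes a b :: real
  assumes "0 \<le> a" "a \<le> 1" "0 \<le> b" "b \<le> 1"
  shows "(1 + a\<^sup>2) * (1 + b\<^sup>2) \<le> 2 * (1 + (a + b - 1)\<^sup>2)"
proof -
  have "2 * (1 + (a + b - 1)\<^sup>2) - (1 + a\<^sup>2) * (1 + b\<^sup>2) = (1 - a) * (1 - b) * (3 - a - b - a * b)"
    by (simp add: algebra_simps power2_eq_square)
  moreover have "a * b \<le> 1" using assms by (simp add: mult_le_one)
  then have "0 \<le> (1 - a) * (1 - b) * (3 - a - b - a * b)"
    using assms by (intro mult_nonneg_nonneg) auto
  ultimately show ?thesis by linarith
qed

lemma stair_value_add_le:
  assumes "0 \<le> u" "0 \<le> t" "t \<le> 1"
  shows "(1 + t\<^sup>2) * stair_value u \<le> stair_value (u + t)"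
proof -
  define k where "k = nat \<lfloor>u\<rfloor>"
  define f where "f = frac u"
  have f: "0 \<le> f" "f < 1" by (simp_all add: f_def frac_lt_1)
  have u: "u = real k + f" using assms by (simp add: k_def f_def frac_def)
  have Vu: "stair_value u = 2 ^ k * (1 + f\<^sup>2)"
    using stair_value_of_nat_add[of f k] f u by simp
  show ?thesis
  proof (cases "f + t \<le> 1")
    case True
    have "stair_value (u + t) = 2 ^ k * (1 + (f + t)\<^sup>2)"
      using stair_value_of_nat_add[of "f + t" k] True f assms u by (simp add: add.assoc)
    then show ?thesis
      using Vu one_plus_square_mult_le[of f t] f assms True
      by (simp add: mult_left_mono mult.left_commute mult.commute)
  next
    case False
    have "u + t = real (Suc k) + (f + t - 1)" using u by simp
    with stair_value_of_nat_add[of "f + t - 1" "Suc k"] False f assms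
    have "stair_value (u + t) = 2 ^ k * (2 * (1 + (f + t - 1)\<^sup>2))"
      by (simp only:) (simp add: algebra_simps)
    then show ?thesis
      using Vu one_plus_square_mult_le_carry[of f t] f assms
      by (simp add: mult_left_mono mult.left_commute mult.commute)
  qed
qed

lemma prod_le_stair_value:
  fixes z :: "nat \<Rightarrow> real"
  assumes "\<forall>i\<in>{1..n}. 0 \<le> z i \<and> z i \<le> 1"
  shows "(\<Prod>i=1..n. 1 + (z i)\<^sup>2) \<le> stair_value (\<Sum>i=1..n. z i)"
  using assms
proof (induction n)
  case 0
  then show ?case by (simp add: stair_value_def)
next
  case (Suc n)
  have z: "0 \<le> z (Suc n)" "z (Suc n) \<le> 1" using Suc.prems by auto
  have "0 \<le> (\<Sum>i=1..n. z i)" using Suc.prems by (intro sum_nonneg) auto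
  have "(\<Prod>i=1..Suc n. 1 + (z i)\<^sup>2) = (1 + (z (Suc n))\<^sup>2) * (\<Prod>i=1..n. 1 + (z i)\<^sup>2)"
    by (simp add: mult.commute)
  also have "\<dots> \<le> (1 + (z (Suc n))\<^sup>2) * stair_value (\<Sum>i=1..n. z i)"
    using Suc by (intro mult_left_mono) auto
  also have "\<dots> \<le> stair_value ((\<Sum>i=1..n. z i) + z (Suc n))"
    using stair_value_add_le \<open>0 \<le> (\<Sum>i=1..n. z i)\<close> z by blast
  also have "\<dots> = stair_value (\<Sum>i=1..Suc n. z i)" by simp
  finally show ?case .
qed

text \<open>The \<open>i\<close>-th coordinate (counting from 1) of \<open>(1, \<dots>, 1, frac s, 0, \<dots>)\<close>.\<close>
definition stair :: "real \<Rightarrow> nat \<Rightarrow> real" where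
  "stair s i = max 0 (min 1 (s + 1 - real i))"

lemma stair_bounds: "0 \<le> stair s i" "stair s i \<le> 1"
  by (simp_all add: stair_def)

lemma stair_sum_prod:
  assumes "0 \<le> s"
  shows "(\<Sum>i=1..n. stair s i) = min s (real n)
       \<and> (\<Prod>i=1..n. 1 + (stair s i)\<^sup>2) = stair_value (min s (real n))"
proof (induction n)
  case 0
  then show ?case using assms by (simp add: stair_value_def)
next
  case (Suc n)
  show ?case
  proof (cases "s \<le> real n")
    case True
    then have "stair s (Suc n) = 0" by (simp add: stair_def)
    then show ?thesis using Suc True by simp
  next
    case False
    define t where "t = min 1 (s - real n)"
    have t: "0 \<le> t" "t \<le> 1" "stair s (Suc n) = t" using False by (auto simp: t_def stair_def)
    have IH: "(\<Sum>i=1..n. stair s i) = real n" "(\<Prod>i=1..n. 1 + (stair s i)\<^sup>2) = 2 ^ n"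
      using Suc.IH False stair_value_of_nat_add[of 0 n] by auto
    have min: "min s (real (Suc n)) = real n + t" using False by (auto simp: t_def)
    show ?thesis
      unfolding min sum.cl_ivl_Suc prod.cl_ivl_Suc
      using IH t stair_value_of_nat_add[of t n] by simp
  qed
qed

theorem mainTheorem11:
  fixes n :: nat and s :: real
  assumes "n \<ge> 1" and "0 \<le> s" and "s \<le> real n"
  shows "(2 ^ nat \<lfloor>s\<rfloor> * (1 + (s - of_int \<lfloor>s\<rfloor>)^2))
           \<in> {(\<Prod>i=1..n. 1 + (z i)^2) | z :: nat \<Rightarrow> real.
                (\<forall>i\<in>{1..n}. 0 \<le> z i \<and> z i \<le> 1) \<and> (\<Sum>i=1..n. z i) = s}
       \<and> (\<forall>z :: nat \<Rightarrow> real. (\<forall>i\<in>{1..n}. 0 \<le> z i \<and> z i \<le> 1) \<and> (\<Sum>i=1..n. z i) = s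
            \<longrightarrow> (\<Prod>i=1..n. 1 + (z i)^2) \<le> 2 ^ nat \<lfloor>s\<rfloor> * (1 + (s - of_int \<lfloor>s\<rfloor>)^2))"
proof -
  have V: "stair_value s = 2 ^ nat \<lfloor>s\<rfloor> * (1 + (s - of_int \<lfloor>s\<rfloor>)^2)"
    by (simp add: stair_value_def frac_def)
  have "(\<Sum>i=1..n. stair s i) = s \<and> (\<Prod>i=1..n. 1 + (stair s i)^2) = stair_value s"
    using stair_sum_prod[OF \<open>0 \<le> s\<close>, of n] \<open>s \<le> real n\<close> by simp
  then have attained: "stair_value s \<in> {(\<Prod>i=1..n. 1 + (z i)^2) | z :: nat \<Rightarrow> real.
                (\<forall>i\<in>{1..n}. 0 \<le> z i \<and> z i \<le> 1) \<and> (\<Sum>i=1..n. z i) = s}"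
    using stair_bounds by (intro CollectI exI[of _ "stair s"]) simp
  have bound: "\<forall>z :: nat \<Rightarrow> real. (\<forall>i\<in>{1..n}. 0 \<le> z i \<and> z i \<le> 1) \<and> (\<Sum>i=1..n. z i) = s
            \<longrightarrow> (\<Prod>i=1..n. 1 + (z i)^2) \<le> stair_value s"
    using prod_le_stair_value by blast
  show ?thesis
    unfolding V[symmetric] using attained bound by (rule conjI)
qed

end
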